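(* Let $K$ be a compact symmetric subset of $\mathbb{R}^m$ containing $0$, of Euclidean diameter at most $\varepsilon$, and let $\hat K$ be its convex hull. For $n\in\mathbb N$ let $K^n=\{k_1+\dots+k_n : k_i\in K\}$. Then for every $n\in\mathbb N$, the Gromov–Hausdorff distance between $K^n$ and its convex hull, both equipped with the Euclidean distance, is at most $(m+1)\varepsilon$. *)

theory Defs
  imports "HOL-Analysis.Analysis"
begin

definition minkowski_power :: "nat \<Rightarrow> 'a::comm_monoid_add set \<Rightarrow> 'a set" where
  "minkowski_power n K = {(\<Sum>i<n. k i) | k. \<forall>i<n. k i \<in> K}"

definition metric_on :: "'a set \<Rightarrow> ('a \<Rightarrow> 'a \<Rightarrow> real) \<Rightarrow> bool" where
  "metric_on S d \<longleftrightarrow>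
     (\<forall>x\<in>S. \<forall>y\<in>S. 0 \<le> d x y \<and> (d x y = 0 \<longleftrightarrow> x = y) \<and> d x y = d y x) \<and>
     (\<forall>x\<in>S. \<forall>y\<in>S. \<forall>z\<in>S. d x z \<le> d x y + d y z)"

definition hausdorff_dist_wrt :: "('a \<Rightarrow> 'a \<Rightarrow> real) \<Rightarrow> 'a set \<Rightarrow> 'a set \<Rightarrow> real" where
  "hausdorff_dist_wrt d A B =
     max (SUP a\<in>A. INF b\<in>B. d a b) (SUP b\<in>B. INF a\<in>A. d a b)"

definition GH_dist :: "'a::metric_space set \<Rightarrow> 'b::metric_space set \<Rightarrow> real" where
  "GH_dist X Y = (INF d\<in>{d. metric_on (Inl ` X \<union> Inr ` Y) d \<and>
                          (\<forall>x\<in>X. \<forall>x'\<in>X. d (Inl x) (Inl x') = dist x x') \<and>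
                          (\<forall>y\<in>Y. \<forall>y'\<in>Y. d (Inr y) (Inr y') = dist y y')}.
                  hausdorff_dist_wrt d (Inl ` X) (Inr ` Y))"

end

theory Submission
  imports Defs
begin

text \<open>Every point of the convex hull of \<open>K\<^sup>n\<close> is \<open>n c\<close> with \<open>c \<in> conv K\<close>, and by
  Carath\'eodory \<open>c\<close> is a convex combination \<open>\<Sum> u\<^sub>x x\<close> of at most \<open>m + 1\<close> points of \<open>K\<close>.
  Rounding the coefficients \<open>n u\<^sub>x\<close> down to integers \<open>a\<^sub>x\<close> gives the point
  \<open>\<Sum> a\<^sub>x x \<in> K\<^sup>n\<close> (padded with zeros), at distance at most \<open>(m + 1) \<epsilon>\<close>. Since \<open>K\<^sup>n\<close>
  is \<open>(m + 1) \<epsilon>\<close>-dense in its convex hull, gluing the two spaces along the inclusion, with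
  an extra \<open>\<delta> > 0\<close> between the copies, bounds the Gromov--Hausdorff distance by
  \<open>(m + 1) \<epsilon> + \<delta>\<close>.\<close>

lemma minkowski_power_0 [simp]: "minkowski_power 0 K = {0}"
  by (auto simp: minkowski_power_def)

lemma minkowski_power_Suc_iff:
  "x \<in> minkowski_power (Suc n) K \<longleftrightarrow> (\<exists>y\<in>minkowski_power n K. \<exists>k\<in>K. x = y + k)"
proof
  assume "x \<in> minkowski_power (Suc n) K"
  then obtain k where x: "x = (\<Sum>i<Suc n. k i)" "\<forall>i<Suc n. k i \<in> K"
    unfolding minkowski_power_def by auto
  then have "(\<Sum>i<n. k i) \<in> minkowski_power n K" "k n \<in> K"
    unfolding minkowski_power_def by auto
  with x(1) show "\<exists>y\<in>minkowski_power n K. \<exists>k\<in>K. x = y + k" by auto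
next
  assume "\<exists>y\<in>minkowski_power n K. \<exists>k\<in>K. x = y + k"
  then obtain k k' where k: "\<forall>i<n. k i \<in> K" "k' \<in> K" "x = (\<Sum>i<n. k i) + k'"
    unfolding minkowski_power_def by auto
  have "(\<Sum>i<n. (k(n := k')) i) = (\<Sum>i<n. k i)" by (rule sum.cong) auto
  with k have "x = (\<Sum>i<Suc n. (k(n := k')) i)" "\<forall>i<Suc n. (k(n := k')) i \<in> K"
    by (auto simp: less_Suc_eq)
  then show "x \<in> minkowski_power (Suc n) K" unfolding minkowski_power_def by blast
qed

lemma minkowski_power_add:
  "x \<in> minkowski_power a K \<Longrightarrow> y \<in> minkowski_power b K \<Longrightarrow> x + y \<in> minkowski_power (a + b) K"
proof (induction b arbitrary: y)
  case (Suc b)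
  then obtain y' k where "y' \<in> minkowski_power b K" "k \<in> K" "y = y' + k"
    by (auto simp: minkowski_power_Suc_iff)
  with Suc show ?case
    unfolding add_Suc_right minkowski_power_Suc_iff by (metis add.assoc)
qed simp

lemma zero_in_minkowski_power: "0 \<in> K \<Longrightarrow> 0 \<in> minkowski_power n K"
  by (induction n) (auto simp: minkowski_power_Suc_iff intro!: bexI[of _ 0])

lemma minkowski_power_mono:
  "0 \<in> K \<Longrightarrow> a \<le> b \<Longrightarrow> minkowski_power a K \<subseteq> minkowski_power b K"
  using minkowski_power_add[of _ a K 0 "b - a"] zero_in_minkowski_power[of K "b - a"] by auto

lemma of_nat_scaleR_in_minkowski_power:
  "(k::'a::real_vector) \<in> K \<Longrightarrow> real c *\<^sub>R k \<in> minkowski_power c K"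
proof (induction c)
  case (Suc c)
  have "real (Suc c) *\<^sub>R k = real c *\<^sub>R k + k" by (simp add: algebra_simps)
  with Suc show ?case unfolding minkowski_power_Suc_iff by blast
qed simp

lemma sum_of_nat_scaleR_in_minkowski_power:
  fixes K :: "'a::real_vector set"
  assumes "finite S" "S \<subseteq> K"
  shows "(\<Sum>x\<in>S. real (a x) *\<^sub>R x) \<in> minkowski_power (sum a S) K"
  using assms
proof (induction S rule: finite_induct)
  case (insert x S)
  then show ?case
    using minkowski_power_add[OF of_nat_scaleR_in_minkowski_power[of x K "a x"]] by auto
qed simp

lemma minkowski_power_subset_scaled_convex_hull:
  fixes K :: "'a::real_vector set"
  assumes "K \<noteq> {}"
  shows "minkowski_power n K \<subseteq> (\<lambda>x. real n *\<^sub>R x) ` (convex hull K)"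
proof (induction n)
  case 0
  then show ?case using assms hull_subset by fastforce
next
  case (Suc n)
  show ?case
  proof
    fix x assume "x \<in> minkowski_power (Suc n) K"
    then obtain c k where c: "c \<in> convex hull K" and k: "k \<in> K" and x: "x = real n *\<^sub>R c + k"
      using Suc by (auto simp: minkowski_power_Suc_iff)
    define c' where "c' = (real n / (real n + 1)) *\<^sub>R c + (1 / (real n + 1)) *\<^sub>R k"
    have "c' \<in> convex hull K"
      unfolding c'_def
      by (rule convexD[OF convex_convex_hull]) (use c k hull_inc in \<open>auto simp: field_simps\<close>)
    moreover have "x = real (Suc n) *\<^sub>R c'"
      unfolding c'_def x by (simp add: scaleR_add_right field_simps)
    ultimately show "x \<in> (\<lambda>x. real (Suc n) *\<^sub>R x) ` (convex hull K)" by blast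
  qed
qed

lemma convex_hull_minkowski_power_subset:
  fixes K :: "'a::real_vector set"
  assumes "K \<noteq> {}"
  shows "convex hull (minkowski_power n K) \<subseteq> (\<lambda>x. real n *\<^sub>R x) ` (convex hull K)"
  by (rule hull_minimal[OF minkowski_power_subset_scaled_convex_hull[OF assms]])
    (simp add: convex_scaling)

lemma bounded_minkowski_power:
  fixes K :: "'a::real_normed_vector set"
  assumes "bounded K"
  shows "bounded (minkowski_power n K)"
proof (cases "K = {}")
  case True
  then have "minkowski_power n K \<subseteq> {0}" by (cases n) (auto simp: minkowski_power_Suc_iff)
  then show ?thesis by (rule bounded_subset[rotated]) simp
next
  case False
  have "bounded ((\<lambda>x. real n *\<^sub>R x) ` (convex hull K))"
    using assms by (intro bounded_scaling bounded_convex_hull)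
  from this minkowski_power_subset_scaled_convex_hull[OF False] show ?thesis
    by (rule bounded_subset)
qed

lemma scaled_convex_combination_near_minkowski_power:
  fixes S :: "'a::real_normed_vector set"
  assumes S: "finite S" "S \<subseteq> K" and "0 \<in> K"
    and u: "\<forall>x\<in>S. 0 \<le> u x" "sum u S = 1"
    and r: "\<forall>x\<in>S. norm x \<le> r"
  shows "\<exists>q\<in>minkowski_power n K. dist (real n *\<^sub>R (\<Sum>x\<in>S. u x *\<^sub>R x)) q \<le> real (card S) * r"
proof -
  define a where "a x = nat \<lfloor>real n * u x\<rfloor>" for x
  define frac where "frac x = real n * u x - real (a x)" for x
  have frac: "0 \<le> frac x \<and> frac x \<le> 1" if "x \<in> S" for x
    using u(1) that unfolding frac_def a_def by (simp add: of_nat_nat) linarith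
  have "real (sum a S) \<le> (\<Sum>x\<in>S. real n * u x)"
    unfolding of_nat_sum by (rule sum_mono) (use frac in \<open>auto simp: frac_def\<close>)
  also have "\<dots> = real n" using u(2) by (simp add: sum_distrib_left[symmetric])
  finally have "sum a S \<le> n" by linarith
  define q where "q = (\<Sum>x\<in>S. real (a x) *\<^sub>R x)"
  have q: "q \<in> minkowski_power n K"
    using sum_of_nat_scaleR_in_minkowski_power[OF S] minkowski_power_mono[OF \<open>0 \<in> K\<close> \<open>sum a S \<le> n\<close>]
    unfolding q_def by blast
  have "dist (real n *\<^sub>R (\<Sum>x\<in>S. u x *\<^sub>R x)) q = norm (\<Sum>x\<in>S. frac x *\<^sub>R x)"
    unfolding dist_norm q_def frac_def
    by (simp add: scaleR_sum_right sum_subtractf[symmetric] scaleR_diff_left)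
  also have "\<dots> \<le> (\<Sum>x\<in>S. norm (frac x *\<^sub>R x))"
    by (rule norm_sum)
  also have "\<dots> \<le> (\<Sum>x\<in>S. r)"
  proof (rule sum_mono)
    fix x assume "x \<in> S"
    then have "norm (frac x *\<^sub>R x) \<le> norm x"
      using frac by (simp add: mult_left_le_one_le)
    also have "\<dots> \<le> r" using r \<open>x \<in> S\<close> by blast
    finally show "norm (frac x *\<^sub>R x) \<le> r" .
  qed
  finally show ?thesis using q by auto
qed

lemma convex_hull_minkowski_power_near:
  fixes K :: "'a::euclidean_space set"
  assumes "0 \<in> K" and r: "\<forall>x\<in>K. norm x \<le> r"
    and p: "p \<in> convex hull (minkowski_power n K)"
  shows "\<exists>q\<in>minkowski_power n K. dist p q \<le> (real DIM('a) + 1) * r"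
proof -
  obtain c where c: "c \<in> convex hull K" "p = real n *\<^sub>R c"
    using p convex_hull_minkowski_power_subset[of K n] \<open>0 \<in> K\<close> by auto
  then obtain S where S: "finite S" "S \<subseteq> K" "card S \<le> DIM('a) + 1" "c \<in> convex hull S"
    unfolding caratheodory[of K] by auto
  then obtain u where u: "\<forall>x\<in>S. 0 \<le> u x" "sum u S = 1" "(\<Sum>x\<in>S. u x *\<^sub>R x) = c"
    unfolding convex_hull_finite[OF S(1)] by auto
  have "0 \<le> r" using r \<open>0 \<in> K\<close> by force
  then have "real (card S) * r \<le> (real DIM('a) + 1) * r"
    using S(3) by (intro mult_right_mono) auto
  moreover obtain q where "q \<in> minkowski_power n K" "dist p q \<le> real (card S) * r"
    using scaled_convex_combination_near_minkowski_power[OF S(1,2) \<open>0 \<in> K\<close> u(1,2), of r n]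
      r S(2) u(3) c(2) by blast
  ultimately show ?thesis by force
qed

lemma hausdorff_dist_wrt_nonneg:
  assumes "a0 \<in> A" "b0 \<in> B" and d: "\<forall>a\<in>A. \<forall>b\<in>B. 0 \<le> d a b \<and> d a b \<le> M"
  shows "0 \<le> hausdorff_dist_wrt d A B"
proof -
  have bdd: "bdd_below ((\<lambda>b. d a b) ` B)" if "a \<in> A" for a
    using d that by (intro bdd_belowI2[where m = 0]) auto
  have "(INF b\<in>B. d a b) \<le> M" if "a \<in> A" for a
    using d that \<open>b0 \<in> B\<close> by (intro cINF_lower2[OF bdd, where x = b0]) auto
  then have "bdd_above ((\<lambda>a. INF b\<in>B. d a b) ` A)"
    by (intro bdd_aboveI2[where M = M])
  moreover have "0 \<le> (INF b\<in>B. d a0 b)"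
    using assms by (intro cINF_greatest) auto
  ultimately have "0 \<le> (SUP a\<in>A. INF b\<in>B. d a b)"
    using \<open>a0 \<in> A\<close> by (intro cSUP_upper2[where x = a0])
  then show ?thesis unfolding hausdorff_dist_wrt_def by linarith
qed

lemma hausdorff_dist_wrt_le:
  assumes "A \<noteq> {}" "B \<noteq> {}" and d: "\<forall>a\<in>A. \<forall>b\<in>B. 0 \<le> d a b"
    and AB: "\<forall>a\<in>A. \<exists>b\<in>B. d a b \<le> C" and BA: "\<forall>b\<in>B. \<exists>a\<in>A. d a b \<le> C"
  shows "hausdorff_dist_wrt d A B \<le> C"
  unfolding hausdorff_dist_wrt_def
proof (rule max.boundedI; rule cSUP_least)
  fix a assume "a \<in> A"
  with AB obtain b where "b \<in> B" "d a b \<le> C" by blast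
  with d \<open>a \<in> A\<close> show "(INF b\<in>B. d a b) \<le> C"
    by (intro cINF_lower2[where x = b]) (auto intro: bdd_belowI2[where m = 0])
next
  fix b assume "b \<in> B"
  with BA obtain a where "a \<in> A" "d a b \<le> C" by blast
  with d \<open>b \<in> B\<close> show "(INF a\<in>A. d a b) \<le> C"
    by (intro cINF_lower2[where x = a]) (auto intro: bdd_belowI2[where m = 0])
qed (use assms in auto)

lemma metric_on_disjoint_union_bounded:
  fixes X :: "'a::metric_space set" and Y :: "'b::metric_space set"
  assumes "x0 \<in> X" "y0 \<in> Y" "bounded X" "bounded Y"
    and d: "metric_on (Inl ` X \<union> Inr ` Y) d"
    and dX: "\<forall>x\<in>X. \<forall>x'\<in>X. d (Inl x) (Inl x') = dist x x'"
    and dY: "\<forall>y\<in>Y. \<forall>y'\<in>Y. d (Inr y) (Inr y') = dist y y'"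
    and "x \<in> X" "y \<in> Y"
  shows "d (Inl x) (Inr y) \<le> diameter X + d (Inl x0) (Inr y0) + diameter Y"
proof -
  have tri: "d u w \<le> d u v + d v w" if "u \<in> Inl ` X \<union> Inr ` Y" "v \<in> Inl ` X \<union> Inr ` Y"
    "w \<in> Inl ` X \<union> Inr ` Y" for u v w
    using d that unfolding metric_on_def by blast
  have "d (Inl x) (Inr y) \<le> d (Inl x) (Inl x0) + d (Inl x0) (Inr y0) + d (Inr y0) (Inr y)"
    using tri[of "Inl x" "Inl x0" "Inr y"] tri[of "Inl x0" "Inr y0" "Inr y"] assms by auto
  moreover have "d (Inl x) (Inl x0) \<le> diameter X" "d (Inr y0) (Inr y) \<le> diameter Y"
    using dX dY assms diameter_bounded_bound by auto
  ultimately show ?thesis by linarith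
qed

lemma GH_dist_le_hausdorff_dist_wrt:
  fixes X :: "'a::metric_space set" and Y :: "'b::metric_space set"
  assumes "X \<noteq> {}" "Y \<noteq> {}" "bounded X" "bounded Y"
    and d: "metric_on (Inl ` X \<union> Inr ` Y) d"
    and dX: "\<forall>x\<in>X. \<forall>x'\<in>X. d (Inl x) (Inl x') = dist x x'"
    and dY: "\<forall>y\<in>Y. \<forall>y'\<in>Y. d (Inr y) (Inr y') = dist y y'"
  shows "GH_dist X Y \<le> hausdorff_dist_wrt d (Inl ` X) (Inr ` Y)"
proof -
  obtain x0 y0 where "x0 \<in> X" "y0 \<in> Y" using assms by blast
  have "0 \<le> hausdorff_dist_wrt d' (Inl ` X) (Inr ` Y)"
    if "metric_on (Inl ` X \<union> Inr ` Y) d'"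
      "\<forall>x\<in>X. \<forall>x'\<in>X. d' (Inl x) (Inl x') = dist x x'"
      "\<forall>y\<in>Y. \<forall>y'\<in>Y. d' (Inr y) (Inr y') = dist y y'" for d'
    using metric_on_disjoint_union_bounded[OF \<open>x0 \<in> X\<close> \<open>y0 \<in> Y\<close> \<open>bounded X\<close> \<open>bounded Y\<close> that]
      that(1) \<open>x0 \<in> X\<close> \<open>y0 \<in> Y\<close> unfolding metric_on_def
    by (intro hausdorff_dist_wrt_nonneg[of "Inl x0" _ "Inr y0"]) blast+
  then show ?thesis
    unfolding GH_dist_def using d dX dY by (intro cINF_lower bdd_belowI2[where m = 0]) auto
qed

text \<open>Adding \<open>\<delta>\<close> between the two copies separates a point of \<open>X\<close> from its copy in \<open>Y\<close>.\<close>
definition glued_dist :: "real \<Rightarrow> 'a::metric_space + 'a \<Rightarrow> 'a + 'a \<Rightarrow> real" where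
  "glued_dist \<delta> u v = dist (case_sum id id u) (case_sum id id v) + (if isl u = isl v then 0 else \<delta>)"

lemma metric_on_glued_dist:
  assumes "0 < \<delta>"
  shows "metric_on S (glued_dist \<delta>)"
  unfolding metric_on_def
proof (intro conjI ballI)
  fix u v w :: "'a + 'a"
  show "0 \<le> glued_dist \<delta> u v" "glued_dist \<delta> u v = glued_dist \<delta> v u"
    using assms by (auto simp: glued_dist_def dist_commute)
  show "glued_dist \<delta> u v = 0 \<longleftrightarrow> u = v"
    using assms by (cases u; cases v) (auto simp: glued_dist_def add_nonneg_eq_0_iff)
  show "glued_dist \<delta> u w \<le> glued_dist \<delta> u v + glued_dist \<delta> v w"
    using dist_triangle[of "case_sum id id u" "case_sum id id w" "case_sum id id v"] assms
    unfolding glued_dist_def by (auto split: if_splits)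
qed

lemma GH_dist_dense_subset_le:
  fixes X Y :: "'a::metric_space set"
  assumes "X \<noteq> {}" "X \<subseteq> Y" "bounded Y"
    and dense: "\<forall>y\<in>Y. \<exists>x\<in>X. dist y x \<le> C"
  shows "GH_dist X Y \<le> C"
proof (rule field_le_epsilon)
  fix \<delta> :: real assume "0 < \<delta>"
  have "0 \<le> C" using dense assms(1,2) by (meson ex_in_conv subsetD zero_le_dist order_trans)
  have "GH_dist X Y \<le> hausdorff_dist_wrt (glued_dist \<delta>) (Inl ` X) (Inr ` Y)"
    using assms bounded_subset[OF \<open>bounded Y\<close> \<open>X \<subseteq> Y\<close>] metric_on_glued_dist[OF \<open>0 < \<delta>\<close>]
    by (intro GH_dist_le_hausdorff_dist_wrt) (auto simp: glued_dist_def)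
  also have "\<dots> \<le> C + \<delta>"
  proof (rule hausdorff_dist_wrt_le)
    show "\<forall>a\<in>Inl ` X. \<exists>b\<in>Inr ` Y. glued_dist \<delta> a b \<le> C + \<delta>"
      using \<open>X \<subseteq> Y\<close> \<open>0 \<le> C\<close> by (force simp: glued_dist_def)
    show "\<forall>b\<in>Inr ` Y. \<exists>a\<in>Inl ` X. glued_dist \<delta> a b \<le> C + \<delta>"
      using dense by (force simp: glued_dist_def dist_commute)
  qed (use assms \<open>0 < \<delta>\<close> in \<open>auto simp: glued_dist_def\<close>)
  finally show "GH_dist X Y \<le> C + \<delta>" .
qed

theorem lemma2p2p5:
  fixes K :: "(real ^ 'm) set" and \<epsilon> :: real and n :: nat
  assumes "compact K"
    and "\<forall>x\<in>K. - x \<in> K"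
    and "0 \<in> K"
    and "diameter K \<le> \<epsilon>"
  shows "GH_dist (minkowski_power n K) (convex hull (minkowski_power n K))
           \<le> (real CARD('m) + 1) * \<epsilon>"
proof (rule GH_dist_dense_subset_le)
  have "bounded K" using \<open>compact K\<close> by (rule compact_imp_bounded)
  then have norm_le: "\<forall>x\<in>K. norm x \<le> \<epsilon>"
    using diameter_bounded_bound[of K _ 0] \<open>0 \<in> K\<close> \<open>diameter K \<le> \<epsilon>\<close> by force
  show "minkowski_power n K \<noteq> {}" using zero_in_minkowski_power[OF \<open>0 \<in> K\<close>] by blast
  show "minkowski_power n K \<subseteq> convex hull minkowski_power n K" by (rule hull_subset)
  show "bounded (convex hull minkowski_power n K)"
    using \<open>bounded K\<close> by (intro bounded_convex_hull bounded_minkowski_power)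
  show "\<forall>y\<in>convex hull minkowski_power n K. \<exists>x\<in>minkowski_power n K.
          dist y x \<le> (real CARD('m) + 1) * \<epsilon>"
    using convex_hull_minkowski_power_near[OF \<open>0 \<in> K\<close> norm_le] by simp
qed

end
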